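(* Fix an association $\kappa$ in which every UE is served by at least one cell and every cell serves at least one UE, and fix a demand vector $\bm{d}\in\mathbb{R}^m_{>0}$. Let $\bm{p}\in\mathbb{R}^n_{>0}$, let $\alpha>1$, and set $\bm{p}'=\bm{p}/\alpha$. Let $\bm{x}$ be the fixed point $\bm{x}=\bm{f}(\bm{h}(\bm{x},\bm{p},\kappa),\bm{d},\kappa)$, and let $\bm{x}'$ be the fixed point $\bm{x}'=\bm{f}(\bm{h}(\bm{x}',\bm{p}',\kappa),\bm{d},\kappa)$. Then $\bm{p}'^{\mathsf T}\bm{x}'\le\bm{p}^{\mathsf T}\bm{x}$.
   Context: Cellular network model. $\mathcal{I}$ is a set of $n$ cells and $\mathcal{J}$ a set of $m$ UEs. For an association $\kappa\in\{0,1\}^{n\times m}$, let $\mathcal{I}_j=\{i:\kappa_{ij}=1\}$ and $\mathcal{J}_i=\{j:\kappa_{ij}=1\}$. $M,B>0$ are constants, $\sigma^2>0$ is the noise power and $g_{ij}>0$ are the channel gains. For $\bm{x}\in\mathbb{R}^n_{\ge0}$ and $\bm{p}\in\mathbb{R}^n_{>0}$: - $h_j(\bm{x},\bm{p},\kappa)=\dfrac{\sum_{i\in\mathcal{I}_j}p_ig_{ij}}{\sum_{k\in\mathcal{I}\setminus\mathcal{I}_j}p_kg_{kj}x_k+\sigma^2}$; - $f_i(\bm{\gamma},\bm{d},\kappa)=\sum_{j\in\mathcal{J}_i}\dfrac{d_j}{MB\log_2(1+\gamma_j)}$. It is known, and assumed here, that for fixed $\bm{p},\bm{d},\kappa$ the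 map $\bm{x}\mapsto\bm{f}(\bm{h}(\bm{x},\bm{p},\kappa),\bm{d},\kappa)$ has a unique fixed point in $\mathbb{R}^n_{\ge0}$. *)

theory Defs
  imports Complex_Main
begin

text \<open>Cells are elements of a finite type 'i, UEs of a finite type 'j.
  An association kappa is a relation kappa i j (cell i serves UE j).
  Vectors are functions on the index type.\<close>

definition served_by :: "('i \<Rightarrow> 'j \<Rightarrow> bool) \<Rightarrow> 'j \<Rightarrow> 'i set" where
  "served_by \<kappa> j = {i. \<kappa> i j}"

definition serves :: "('i \<Rightarrow> 'j \<Rightarrow> bool) \<Rightarrow> 'i \<Rightarrow> 'j set" where
  "serves \<kappa> i = {j. \<kappa> i j}"

definition hfun :: "real \<Rightarrow> ('i::finite \<Rightarrow> 'j \<Rightarrow> real) \<Rightarrow> ('i \<Rightarrow> real) \<Rightarrow> ('i \<Rightarrow> real)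
    \<Rightarrow> ('i \<Rightarrow> 'j \<Rightarrow> bool) \<Rightarrow> 'j \<Rightarrow> real" where
  "hfun \<sigma>2 g x p \<kappa> j =
     (\<Sum>i\<in>served_by \<kappa> j. p i * g i j) /
     ((\<Sum>k\<in>UNIV - served_by \<kappa> j. p k * g k j * x k) + \<sigma>2)"

definition ffun :: "real \<Rightarrow> real \<Rightarrow> ('j::finite \<Rightarrow> real) \<Rightarrow> ('j \<Rightarrow> real)
    \<Rightarrow> ('i \<Rightarrow> 'j \<Rightarrow> bool) \<Rightarrow> 'i \<Rightarrow> real" where
  "ffun M B \<gamma> d \<kappa> i = (\<Sum>j\<in>serves \<kappa> i. d j / (M * B * log 2 (1 + \<gamma> j)))"

definition loadmap :: "real \<Rightarrow> real \<Rightarrow> real \<Rightarrow> ('i::finite \<Rightarrow> 'j::finite \<Rightarrow> real)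
    \<Rightarrow> ('i \<Rightarrow> real) \<Rightarrow> ('j \<Rightarrow> real) \<Rightarrow> ('i \<Rightarrow> 'j \<Rightarrow> bool) \<Rightarrow> ('i \<Rightarrow> real) \<Rightarrow> ('i \<Rightarrow> real)" where
  "loadmap M B \<sigma>2 g p d \<kappa> x = ffun M B (hfun \<sigma>2 g x p \<kappa>) d \<kappa>"

end

theory Submission
  imports Defs "HOL-Analysis.Convex"
begin

text \<open>It suffices to show
  \<open>x' \<le> \<alpha> x\<close> componentwise. Suppose the largest ratio \<open>c = max\<^sub>i x'\<^sub>i / x\<^sub>i\<close> exceeds \<open>\<alpha>\<close>.
  Dividing all powers by \<open>\<alpha>\<close> is the same as multiplying the noise by \<open>\<alpha>\<close>, and since
  \<open>x' \<le> c x\<close> and \<open>\<alpha> < c\<close>, every SINR at \<open>x'\<close> exceeds the corresponding SINR at \<open>x\<close>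
  divided by \<open>c\<close>. By concavity of the logarithm, \<open>log (1 + \<gamma>) \<le> c log (1 + \<gamma>/c)\<close>, so every
  load at \<open>x'\<close> is strictly less than \<open>c\<close> times the load at \<open>x\<close>, contradicting the choice
  of \<open>c\<close> at the cell attaining the maximum.\<close>

lemma log_one_plus_le_scaled:
  fixes b h c :: real
  assumes "b > 1" "h \<ge> 0" "c \<ge> 1"
  shows "log b (1 + h) \<le> c * log b (1 + h / c)"
proof -
  have "(1 - 1/c) * log b 1 + (1/c) * log b (1 + h) \<le> log b ((1 - 1/c) *\<^sub>R 1 + (1/c) *\<^sub>R (1 + h))"
    using concave_onD[OF log_concave[OF \<open>b > 1\<close>], of "1/c" 1 "1 + h"] assms
    by simp
  also have "(1 - 1/c) *\<^sub>R 1 + (1/c) *\<^sub>R (1 + h) = 1 + h / c"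
    using assms by (simp add: field_simps)
  finally show ?thesis
    using assms by (simp add: field_simps)
qed

lemma le_scaled_by_max_ratio:
  fixes x y :: "'i::finite \<Rightarrow> real"
  assumes x_pos: "\<forall>i. x i > 0"
    and contract: "\<And>c i. c > a \<Longrightarrow> \<forall>k. y k \<le> c * x k \<Longrightarrow> y i < c * x i"
  shows "y i \<le> a * x i"
proof (rule ccontr)
  assume "\<not> y i \<le> a * x i"
  define c where "c = Max (range (\<lambda>k. y k / x k))"
  obtain i0 where c_eq: "c = y i0 / x i0"
    using Max_in[of "range (\<lambda>k. y k / x k)"] unfolding c_def by fastforce
  have y_le: "y k \<le> c * x k" for k
  proof -
    have "y k / x k \<le> c"
      unfolding c_def by (rule Max_ge) auto
    then show ?thesis
      using x_pos by (simp add: pos_divide_le_eq mult.commute)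
  qed
  have "a < y i / x i"
    using \<open>\<not> y i \<le> a * x i\<close> x_pos by (simp add: less_divide_eq)
  also have "\<dots> \<le> c"
    using y_le[of i] x_pos by (simp add: pos_divide_le_eq mult.commute)
  finally have "y i0 < c * x i0"
    using contract y_le by blast
  moreover have "c * x i0 = y i0"
    using c_eq x_pos[rule_format, of i0] by simp
  ultimately show False
    by simp
qed

lemma served_power_pos:
  fixes p :: "'i::finite \<Rightarrow> real"
  assumes "\<forall>i. p i > 0" "\<forall>i j. g i j > 0" "\<exists>i. \<kappa> i j"
  shows "(\<Sum>i\<in>served_by \<kappa> j. p i * g i j) > 0"
  using assms by (intro sum_pos) (auto simp: served_by_def intro: mult_pos_pos)

lemma interference_nonneg:
  fixes p :: "'i::finite \<Rightarrow> real"
  assumes "\<forall>i. p i \<ge> 0" "\<forall>i j. g i j \<ge> 0" "\<forall>i. x i \<ge> 0"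
  shows "(\<Sum>k\<in>UNIV - served_by \<kappa> j. p k * g k j * x k) \<ge> 0"
  using assms by (intro sum_nonneg) auto

lemma hfun_pos:
  assumes "\<sigma>2 > 0" "\<forall>i. p i > 0" "\<forall>i j. g i j > 0" "\<forall>i. x i \<ge> 0" "\<exists>i. \<kappa> i j"
  shows "hfun \<sigma>2 g x p \<kappa> j > 0"
proof -
  have "(\<Sum>i\<in>served_by \<kappa> j. p i * g i j) > 0"
    by (intro served_power_pos assms(2,3,5))
  moreover have "(\<Sum>k\<in>UNIV - served_by \<kappa> j. p k * g k j * x k) \<ge> 0"
    using assms(2-4) by (intro interference_nonneg) (auto simp: less_imp_le)
  ultimately show ?thesis
    unfolding hfun_def using assms(1) by simp
qed

lemma hfun_divide_power:
  assumes "a > 0"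
  shows "hfun \<sigma>2 g x (\<lambda>i. p i / a) \<kappa> = hfun (a * \<sigma>2) g x p \<kappa>"
proof
  fix j
  have scale: "(\<Sum>i\<in>A. p i / a * g i j) = (\<Sum>i\<in>A. p i * g i j) / a"
    "(\<Sum>i\<in>A. p i / a * g i j * x i) = (\<Sum>i\<in>A. p i * g i j * x i) / a" for A
    by (simp_all add: sum_divide_distrib)
  have "a * (I / a + \<sigma>2) = I + a * \<sigma>2" for I
    using assms by (simp add: distrib_left)
  then show "hfun \<sigma>2 g x (\<lambda>i. p i / a) \<kappa> j = hfun (a * \<sigma>2) g x p \<kappa> j"
    unfolding hfun_def scale by (simp only: divide_divide_eq_left)
qed

lemma hfun_scaled_lower_bound:
  assumes p: "\<forall>i. p i > 0" and g: "\<forall>i j. g i j > 0" and served: "\<exists>i. \<kappa> i j"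
    and \<sigma>': "\<sigma>' > 0" and \<sigma>_less: "\<sigma>' < c * \<sigma>"
    and y: "\<forall>k. 0 \<le> y k \<and> y k \<le> c * x k"
  shows "hfun \<sigma> g x p \<kappa> j / c < hfun \<sigma>' g y p \<kappa> j"
proof -
  define S where "S = (\<Sum>i\<in>served_by \<kappa> j. p i * g i j)"
  define I where "I z = (\<Sum>k\<in>UNIV - served_by \<kappa> j. p k * g k j * z k)" for z
  have S: "S > 0"
    unfolding S_def by (intro served_power_pos p g served)
  have Iy: "I y \<ge> 0"
    unfolding I_def using p g y by (intro interference_nonneg) (auto simp: less_imp_le)
  have "I y \<le> (\<Sum>k\<in>UNIV - served_by \<kappa> j. c * (p k * g k j * x k))"
    unfolding I_def using p g y
    by (intro sum_mono) (simp add: mult_left_mono less_imp_le mult.left_commute)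
  also have "\<dots> = c * I x"
    unfolding I_def by (simp add: sum_distrib_left)
  finally have "I y + \<sigma>' < c * (I x + \<sigma>)"
    using \<sigma>_less by (simp add: distrib_left)
  then have "S / (c * (I x + \<sigma>)) < S / (I y + \<sigma>')"
    using S Iy \<sigma>' by (intro divide_strict_left_mono) auto
  then show ?thesis
    unfolding hfun_def S_def I_def by (simp add: mult.commute)
qed

lemma ffun_pos:
  assumes "M > 0" "B > 0" "\<forall>j. d j > 0" "\<exists>j. \<kappa> i j" "\<forall>j. \<gamma> j > 0"
  shows "ffun M B \<gamma> d \<kappa> i > 0"
proof -
  have "log 2 (1 + \<gamma> j) > 0" for j
    using assms(5)[rule_format, of j] by simp
  then show ?thesis
    using assms unfolding ffun_def
    by (intro sum_pos) (auto simp: serves_def intro!: divide_pos_pos mult_pos_pos)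
qed

lemma ffun_scaled_upper_bound:
  assumes M: "M > 0" and B: "B > 0" and d: "\<forall>j. d j > 0" and serving: "\<exists>j. \<kappa> i j"
    and c: "c \<ge> 1" and \<gamma>: "\<forall>j. \<gamma> j > 0" and \<gamma>': "\<forall>j. \<gamma> j / c < \<gamma>' j"
  shows "ffun M B \<gamma>' d \<kappa> i < c * ffun M B \<gamma> d \<kappa> i"
proof -
  have term_bound: "d j / (M * B * log 2 (1 + \<gamma>' j)) < c * (d j / (M * B * log 2 (1 + \<gamma> j)))" for j
  proof -
    define L L' where "L = log 2 (1 + \<gamma> j)" and "L' = log 2 (1 + \<gamma>' j)"
    have \<gamma>_c: "\<gamma> j / c > 0"
      using \<gamma> c by simp
    have L: "L > 0"
      unfolding L_def using \<gamma>[rule_format, of j] by simp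
    have L': "L' > 0"
      unfolding L'_def using \<gamma>'[rule_format, of j] \<gamma>_c by simp
    have "L \<le> c * log 2 (1 + \<gamma> j / c)"
      unfolding L_def using log_one_plus_le_scaled[of 2 "\<gamma> j" c] \<gamma> c by (simp add: less_imp_le)
    also have "\<dots> < c * L'"
      unfolding L'_def using \<gamma>'[rule_format, of j] \<gamma>_c c by simp
    finally have "M * B * (L / c) < M * B * L'"
      using M B c by (simp add: divide_less_eq mult.commute)
    then have "d j / (M * B * L') < d j / (M * B * (L / c))"
      using M B L L' c d by (intro divide_strict_left_mono) auto
    also have "\<dots> = c * (d j / (M * B * L))"
      using c by simp
    finally show ?thesis
      unfolding L_def L'_def .
  qed
  have "ffun M B \<gamma>' d \<kappa> i < (\<Sum>j\<in>serves \<kappa> i. c * (d j / (M * B * log 2 (1 + \<gamma> j))))"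
    unfolding ffun_def using serving term_bound
    by (intro sum_strict_mono) (auto simp: serves_def)
  then show ?thesis
    unfolding ffun_def by (simp add: sum_distrib_left)
qed

theorem theorem1:
  fixes M B \<sigma>2 \<alpha> :: real
    and g :: "'i::finite \<Rightarrow> 'j::finite \<Rightarrow> real"
    and \<kappa> :: "'i \<Rightarrow> 'j \<Rightarrow> bool"
    and d :: "'j \<Rightarrow> real"
    and p x x' :: "'i \<Rightarrow> real"
  assumes M: "M > 0" and B: "B > 0" and \<sigma>: "\<sigma>2 > 0"
    and g: "\<forall>i j. g i j > 0"
    and ue_served: "\<forall>j. \<exists>i. \<kappa> i j"
    and cell_serves: "\<forall>i. \<exists>j. \<kappa> i j"
    and d: "\<forall>j. d j > 0"
    and p: "\<forall>i. p i > 0"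
    and \<alpha>: "\<alpha> > 1"
    and uniq: "\<forall>q::'i \<Rightarrow> real. (\<forall>i. q i > 0) \<longrightarrow>
                 (\<exists>!y. (\<forall>i. y i \<ge> 0) \<and> loadmap M B \<sigma>2 g q d \<kappa> y = y)"
    and x_nonneg: "\<forall>i. x i \<ge> 0"
    and x_fix: "loadmap M B \<sigma>2 g p d \<kappa> x = x"
    and x'_nonneg: "\<forall>i. x' i \<ge> 0"
    and x'_fix: "loadmap M B \<sigma>2 g (\<lambda>i. p i / \<alpha>) d \<kappa> x' = x'"
  shows "(\<Sum>i\<in>UNIV. (p i / \<alpha>) * x' i) \<le> (\<Sum>i\<in>UNIV. p i * x i)"
proof -
  have \<alpha>_pos: "\<alpha> > 0"
    using \<alpha> by simp
  have h_pos: "\<forall>j. hfun \<sigma>2 g x p \<kappa> j > 0"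
    using ue_served by (intro allI hfun_pos \<sigma> p g x_nonneg) auto
  have x_eq: "ffun M B (hfun \<sigma>2 g x p \<kappa>) d \<kappa> i = x i" for i
    using fun_cong[OF x_fix, of i] by (simp only: loadmap_def)
  have x'_eq: "ffun M B (hfun (\<alpha> * \<sigma>2) g x' p \<kappa>) d \<kappa> i = x' i" for i
    using fun_cong[OF x'_fix, of i] unfolding loadmap_def hfun_divide_power[OF \<alpha>_pos] .
  have x_pos: "\<forall>i. x i > 0"
    using ffun_pos[OF M B d _ h_pos] cell_serves x_eq by metis
  have x'_le: "x' i \<le> \<alpha> * x i" for i
  proof (rule le_scaled_by_max_ratio[OF x_pos])
    fix c k
    assume c: "c > \<alpha>" and x'_le_c: "\<forall>k. x' k \<le> c * x k"
    have "hfun \<sigma>2 g x p \<kappa> j / c < hfun (\<alpha> * \<sigma>2) g x' p \<kappa> j" for j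
    proof (rule hfun_scaled_lower_bound[OF p g])
      show "\<exists>i. \<kappa> i j"
        using ue_served by blast
      show "0 < \<alpha> * \<sigma>2" "\<alpha> * \<sigma>2 < c * \<sigma>2"
        using \<alpha>_pos \<sigma> c by simp_all
      show "\<forall>k. 0 \<le> x' k \<and> x' k \<le> c * x k"
        using x'_nonneg x'_le_c by blast
    qed
    then have "ffun M B (hfun (\<alpha> * \<sigma>2) g x' p \<kappa>) d \<kappa> k < c * ffun M B (hfun \<sigma>2 g x p \<kappa>) d \<kappa> k"
      using cell_serves c \<alpha> by (intro ffun_scaled_upper_bound[OF M B d _ _ h_pos] allI) auto
    then show "x' k < c * x k"
      by (simp only: x_eq x'_eq)
  qed
  show ?thesis
    using x'_le p \<alpha> by (intro sum_mono) (simp add: field_simps)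
qed

end
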